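(* Let $K$ be a field of characteristic $p>0$ with $\dim_{K^p}K<\infty$, and let $(W_n)_{n\ge0}$ be a power tower on $K$. Then all degrees $[W_{n-1}:W_n]$ are finite and $$[K:W_1]\ \ge\ [W_1:W_2]\ \ge\ [W_2:W_3]\ \ge\ \cdots\ \ge\ 1 .$$
   Context: For a field $K$ of characteristic $p>0$ and $n\ge0$, $K^{p^n}=\{x^{p^n}:x\in K\}$. For subfields $A,B\subset K$, $A\cdot B$ denotes their composite. A power tower on $K$ is a sequence of subfields $W_0,W_1,W_2,\ldots$ of $K$ such that $W_j=W_i\cdot K^{p^j}$ for all $0\le j\le i$ (in particular $W_0=K$ and $K^{p^n}\subset W_n\subset W_{n-1}$). *)

theory Defs
  imports "HOL-Algebra.Embedded_Algebras" "HOL-Algebra.Generated_Fields"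
    "HOL-Computational_Algebra.Primes"
begin

definition pow_subfield :: "('a, 'b) ring_scheme \<Rightarrow> nat \<Rightarrow> nat \<Rightarrow> 'a set" where
  "pow_subfield R p n = (\<lambda>x. x [^]\<^bsub>R\<^esub> (p ^ n)) ` carrier R"

definition composite :: "('a, 'b) ring_scheme \<Rightarrow> 'a set \<Rightarrow> 'a set \<Rightarrow> 'a set" where
  "composite R A B = generate_field R (A \<union> B)"

definition power_tower :: "('a, 'b) ring_scheme \<Rightarrow> nat \<Rightarrow> (nat \<Rightarrow> 'a set) \<Rightarrow> bool" where
  "power_tower R p W \<longleftrightarrow>
     (\<forall>i. subfield (W i) R) \<and>
     (\<forall>i j. j \<le> i \<longrightarrow> W j = composite R (W i) (pow_subfield R p j))"

end

theory Submission
  imports Defs "HOL-Algebra.Finite_Extensions"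
begin

(* The Frobenius map F x = x^p is an injective ring endomorphism of K with
   F(K^(p^n)) = K^(p^(n+1)), and it maps W_n into W_(n+1); together with
   W_(n+1) = W_(n+2) . K^(p^(n+1)) this gives W_(n+1) = W_(n+2) . F(W_n).
   Now F(W_n) has degree [W_n : W_(n+1)] over F(W_(n+1)), which lies in W_(n+2),
   and a compositum M . A with A finite over a subfield B of M is spanned over M
   by any B-basis of A (the span is a finite-dimensional domain over M, hence a
   field). So [W_(n+1) : W_(n+2)] <= [W_n : W_(n+1)].  The finiteness of [K : W_1]
   follows in the same way from K = W_1 . K and K^p <= W_1. *)

hide_const (open) Divisibility.prime

lemma (in cring) binomial_expansion:
  assumes a: "a \<in> carrier R" and b: "b \<in> carrier R"
  shows "(a \<oplus> b) [^] n = (\<Oplus>k\<in>{..n}. [(n choose k)] \<cdot> (a [^] k \<otimes> b [^] (n - k)))"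
proof (induction n)
  case 0
  then show ?case using a b by simp
next
  case (Suc n)
  define x where "x k = a [^] k \<otimes> b [^] (Suc n - k)" for k
  have x: "x k \<in> carrier R" for k unfolding x_def using a b by simp
  define S where "S = (\<Oplus>k\<in>{..n}. [(n choose k)] \<cdot> (a [^] k \<otimes> b [^] (n - k)))"
  have S: "S \<in> carrier R" unfolding S_def using a b by simp
  have aS: "a \<otimes> S = (\<Oplus>k\<in>{..n}. [(n choose k)] \<cdot> x (Suc k))"
    unfolding S_def using a b
    by (simp add: finsum_rdistr add_pow_rdistr x_def m_assoc[symmetric] m_comm[of a])
  have "b \<otimes> S = (\<Oplus>k\<in>{..n}. [(n choose k)] \<cdot> x k)"
  proof -
    have "b \<otimes> ([(n choose k)] \<cdot> (a [^] k \<otimes> b [^] (n - k))) = [(n choose k)] \<cdot> x k"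
      if "k \<le> n" for k
      using a b that
      by (simp add: add_pow_rdistr x_def m_lcomm[of b] Suc_diff_le m_comm[of b "b [^] (n - k)"])
    then show ?thesis
      unfolding S_def using a b by (simp add: finsum_rdistr) (intro finsum_cong'; simp add: x_def)
  qed
  also have "\<dots> = (\<Oplus>k\<in>{..Suc n}. [(n choose k)] \<cdot> x k)"
    using x by (simp add: Pi_iff binomial_eq_0)
  also have "\<dots> = (\<Oplus>k\<in>{..n}. [(n choose Suc k)] \<cdot> x (Suc k)) \<oplus> x 0"
    using x by (subst finsum_Suc2) (simp_all add: Pi_iff)
  finally have bS: "b \<otimes> S = (\<Oplus>k\<in>{..n}. [(n choose Suc k)] \<cdot> x (Suc k)) \<oplus> x 0" .
  have "(a \<oplus> b) [^] Suc n = a \<otimes> S \<oplus> b \<otimes> S"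
    using a b S by (simp add: Suc.IH S_def[symmetric] r_distr m_comm)
  also have "\<dots> = (\<Oplus>k\<in>{..n}. [(n choose k)] \<cdot> x (Suc k) \<oplus> [(n choose Suc k)] \<cdot> x (Suc k)) \<oplus> x 0"
    using x by (simp add: aS bS a_assoc Pi_iff)
  also have "\<dots> = (\<Oplus>k\<in>{..Suc n}. [(Suc n choose k)] \<cdot> x k)"
    \<comment> \<open>Pascal's rule\<close>
    using x by (subst finsum_Suc2) (simp_all add: add.nat_pow_mult Pi_iff)
  finally show ?case unfolding x_def .
qed

lemma (in ring) add_pow_eq_zero_if_char_dvd:
  fixes p m :: nat
  assumes char: "[p] \<cdot> \<one> = \<zero>" and "p dvd m" and x: "x \<in> carrier R"
  shows "[m] \<cdot> x = \<zero>"
proof -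
  obtain c where m: "m = p * c" using \<open>p dvd m\<close> by blast
  have "[m] \<cdot> x = [c] \<cdot> ([p] \<cdot> x)"
    unfolding m using x by (simp add: add.nat_pow_pow mult.commute)
  also have "[p] \<cdot> x = \<zero>"
    using add_pow_ldistr[of \<one> x p] char x by simp
  finally show ?thesis by simp
qed

lemma (in cring) freshmans_dream:
  fixes p :: nat
  assumes p: "prime p" and char: "[p] \<cdot> \<one> = \<zero>"
    and a: "a \<in> carrier R" and b: "b \<in> carrier R"
  shows "(a \<oplus> b) [^] p = a [^] p \<oplus> b [^] p"
proof -
  obtain r where r: "p = Suc (Suc r)"
    using prime_ge_2_nat[OF p] by (metis add_2_eq_Suc le_Suc_ex)
  define t where "t k = [(p choose k)] \<cdot> (a [^] k \<otimes> b [^] (p - k))" for k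
  have t: "t k \<in> carrier R" for k unfolding t_def using a b by simp
  have "t (Suc k) = \<zero>" if "k \<le> r" for k
    unfolding t_def using that r p a b
    by (intro add_pow_eq_zero_if_char_dvd[OF char] dvd_choose_prime) auto
  then have "(\<Oplus>k\<in>{..r}. t (Suc k)) = (\<Oplus>k\<in>{..r}. \<zero>)"
    by (intro finsum_cong') auto
  then have middle: "(\<Oplus>k\<in>{..r}. t (Suc k)) = \<zero>"
    by simp
  have "(a \<oplus> b) [^] p = (\<Oplus>k\<in>{..Suc (Suc r)}. t k)"
    unfolding t_def r[symmetric] by (rule binomial_expansion[OF a b])
  also have "\<dots> = t (Suc (Suc r)) \<oplus> ((\<Oplus>k\<in>{..r}. t (Suc k)) \<oplus> t 0)"
    using t by (subst finsum_Suc, simp add: Pi_iff) (subst finsum_Suc2, simp_all add: Pi_iff)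
  also have "\<dots> = a [^] p \<oplus> b [^] p"
    using a b r t by (simp add: middle) (simp add: t_def)
  finally show ?thesis .
qed

lemma (in cring) frobenius_is_ring_hom:
  fixes p :: nat
  assumes "prime p" and "[p] \<cdot> \<one> = \<zero>"
  shows "(\<lambda>x. x [^] p) \<in> ring_hom R R"
  by (rule ring_hom_memI) (auto simp: nat_pow_distrib freshmans_dream[OF assms])

lemma (in ring) pow_subfield_Suc:
  "pow_subfield R p (Suc n) = (\<lambda>x. x [^] p) ` pow_subfield R p n"
  unfolding pow_subfield_def image_image
  by (intro image_cong) (auto simp: nat_pow_pow mult.commute)

lemma (in ring) dim_Span_le_length:
  assumes K: "subfield K R"
  shows "set Us \<subseteq> carrier R \<Longrightarrow> dim K (Span K Us) \<le> length Us"
proof (induction Us)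
  case Nil
  then show ?case using dimI[OF K zero_dim] by (simp add: over_def)
next
  case (Cons u Us)
  have fin: "dimension (dim K (Span K Us)) K (Span K Us)"
    using finite_dimensionE[OF K Span_finite_dimension[OF K]] Cons.prems by (simp add: over_def)
  show ?case
  proof (cases "u \<in> Span K Us")
    case True
    then have "Span K (u # Us) = Span K Us"
      using Cons.prems mono_Span_subset[OF K] Span_base_incl[OF K] mono_Span[OF K]
      by (metis insert_subset list.simps(15) subset_antisym)
    then show ?thesis using Cons by (simp del: Span.simps)
  next
    case False
    then have "dimension (Suc (dim K (Span K Us))) K (Span K (u # Us))"
      using Cons.prems fin by (auto intro: Suc_dim)
    then show ?thesis using Cons dimI[OF K] by (simp add: over_def del: Span.simps)
  qed
qed

lemma (in ring) Span_mono_scalars: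
  assumes "subfield K R" "subfield K' R" "K \<subseteq> K'" and Us: "set Us \<subseteq> carrier R"
  shows "Span K Us \<subseteq> Span K' Us"
  unfolding Span_eq_combine_set[OF assms(1) Us] Span_eq_combine_set[OF assms(2) Us]
  using assms(3) by blast

lemma (in cring) subalgebra_mult_vimage:
  assumes V: "subalgebra K V R" and x: "x \<in> carrier R" and K: "K \<subseteq> carrier R"
  shows "subalgebra K {y \<in> carrier R. x \<otimes> y \<in> V} R"
proof -
  have V_sub: "subgroup V (add_monoid R)" using subalgebra.axioms(1)[OF V] .
  have Vc: "V \<subseteq> carrier R" using subalgebra_in_carrier[OF V] .
  have V_minus: "\<ominus> v \<in> V" if "v \<in> V" for v
    using subgroup.m_inv_closed[OF V_sub] that Vc by (simp add: a_inv_def)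
  show ?thesis
    unfolding subalgebra_def subalgebra_axioms_def
  proof (intro conjI allI impI)
    show "subgroup {y \<in> carrier R. x \<otimes> y \<in> V} (add_monoid R)"
    proof (rule add.subgroupI)
      show "\<ominus> a \<in> {y \<in> carrier R. x \<otimes> y \<in> V}" if "a \<in> {y \<in> carrier R. x \<otimes> y \<in> V}" for a
        using that x V_minus by (auto simp: r_minus)
    qed (use x subgroup.one_closed[OF V_sub] subgroup.m_closed[OF V_sub] in \<open>auto simp: r_distr\<close>)
    show "k \<otimes> v \<in> {y \<in> carrier R. x \<otimes> y \<in> V}" if "k \<in> K" "v \<in> {y \<in> carrier R. x \<otimes> y \<in> V}" for k v
      using that K x subalgebra.smult_closed[OF V] by (auto simp: m_lcomm)
  qed
qed

lemma (in cring) Span_mult_closed: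
  assumes K: "subfield K R" and Us: "set Us \<subseteq> carrier R"
    and gens: "\<And>u v. u \<in> set Us \<Longrightarrow> v \<in> set Us \<Longrightarrow> u \<otimes> v \<in> Span K Us"
    and x: "x \<in> Span K Us" and y: "y \<in> Span K Us"
  shows "x \<otimes> y \<in> Span K Us"
proof -
  have Span_c: "Span K Us \<subseteq> carrier R" using Span_in_carrier[OF subfieldE(3)[OF K] Us] .
  \<comment> \<open>For fixed z the y with z y in the span form a subspace, so generators y suffice.\<close>
  have lmult: "z \<otimes> y \<in> Span K Us"
    if z: "z \<in> carrier R" "\<And>u. u \<in> set Us \<Longrightarrow> z \<otimes> u \<in> Span K Us"
      and y: "y \<in> Span K Us" for z y
  proof -
    have "Span K Us \<subseteq> {y \<in> carrier R. z \<otimes> y \<in> Span K Us}"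
      using z Us
      by (intro subalgebra_Span_incl[OF K subalgebra_mult_vimage[OF Span_is_subalgebra[OF K Us]]])
        (auto simp: subfieldE(3)[OF K] simp del: Span.simps)
    then show ?thesis using y by blast
  qed
  have gen_mult: "u \<otimes> z \<in> Span K Us" if "u \<in> set Us" "z \<in> Span K Us" for u z
    using lmult gens that Us by (auto simp del: Span.simps)
  show ?thesis
  proof (rule lmult[OF _ _ y])
    show "x \<in> carrier R" using x Span_c by auto
    show "x \<otimes> u \<in> Span K Us" if "u \<in> set Us" for u
    proof -
      have "x \<otimes> u = u \<otimes> x" using that x Span_c Us by (intro m_comm) auto
      then show ?thesis using gen_mult[OF that x] by simp
    qed
  qed
qed

lemma (in field) subring_finite_dimension_imp_subfield:
  assumes K: "subfield K R" and E: "subring E R" "K \<subseteq> E" and fin: "finite_dimension K E"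
  shows "subfield E R"
proof (rule subfieldI'[OF E(1)])
  fix z assume z: "z \<in> E - {\<zero>}"
  then have zc: "z \<in> carrier R" using subringE(1)[OF E(1)] by auto
  have "(algebraic over K) z"
    using finite_dimension_imp_algebraic[OF K E(1) fin] z by auto
  then have "subfield (simple_extension K z) R"
    using simple_extension_is_subfield[OF K zc] by simp
  then have "inv z \<in> simple_extension K z"
    using subfield_m_inv(1) simple_extension_mem[OF subfieldE(1)[OF K] zc] z by auto
  moreover have "simple_extension K z \<subseteq> E"
    using simple_extension_minimal[OF subfieldE(1)[OF K] zc] E z by blast
  ultimately show "inv z \<in> E" by auto
qed

lemma (in ring) subfield_subset_Span:
  assumes K: "subfield K R" and Us: "set Us \<subseteq> carrier R" and one: "\<one> \<in> Span K Us"
  shows "K \<subseteq> Span K Us"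
  using Span_smult_closed[OF K Us _ one] subfieldE(3)[OF K] by force

lemma (in field) Span_is_subfield:
  assumes K: "subfield K R" and Us: "set Us \<subseteq> carrier R"
    and gens: "\<And>u v. u \<in> set Us \<Longrightarrow> v \<in> set Us \<Longrightarrow> u \<otimes> v \<in> Span K Us"
    and one: "\<one> \<in> Span K Us"
  shows "subfield (Span K Us) R"
proof (rule subring_finite_dimension_imp_subfield[OF K])
  show "subring (Span K Us) R"
    using Span_in_carrier[OF subfieldE(3)[OF K] Us] one Span_mult_closed[OF K Us gens]
      Span_subgroup_props[OF K Us]
    by (intro subringI) auto
qed (use Span_finite_dimension[OF K Us] subfield_subset_Span[OF K Us one] in auto)

lemma (in ring) subring_is_subalgebra:
  assumes E: "subring E R" and "K \<subseteq> E"
  shows "subalgebra K E R"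
  using subring.axioms(1)[OF E] subringE(6)[OF E] assms(2)
  unfolding subalgebra_def subalgebra_axioms_def additive_subgroup_def by blast

lemma (in field) composite_eq_Span:
  assumes M: "subfield M R" and B: "subfield B R" "B \<subseteq> M" and A: "subfield A R"
    and Us: "set Us \<subseteq> carrier R" "Span B Us = A"
  shows "composite R M A = Span M Us"
proof
  have Ac: "A \<subseteq> carrier R" "M \<subseteq> carrier R" using subfieldE(3) A M by auto
  have A_Span: "A \<subseteq> Span M Us"
    using Span_mono_scalars[OF B(1) M B(2) Us(1)] Us(2) by simp
  have gens: "set Us \<subseteq> A" using Span_base_incl[OF B(1) Us(1)] Us(2) by simp
  have "subfield (Span M Us) R"
  proof (rule Span_is_subfield[OF M Us(1)])
    show "u \<otimes> v \<in> Span M Us" if "u \<in> set Us" "v \<in> set Us" for u v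
      using gens that subringE(6)[OF subfieldE(1)[OF A]] A_Span by blast
    show "\<one> \<in> Span M Us" using subringE(3)[OF subfieldE(1)[OF A]] A_Span by blast
  qed
  moreover have "M \<subseteq> Span M Us"
    using subfield_subset_Span[OF M Us(1)] subringE(3)[OF subfieldE(1)[OF A]] A_Span by blast
  ultimately show "composite R M A \<subseteq> Span M Us"
    unfolding composite_def using A_Span Ac by (intro generate_field_min_subfield1) auto
  have "subfield (composite R M A) R" and MA: "M \<union> A \<subseteq> composite R M A"
    unfolding composite_def using Ac generate_fieldE(1,2)[OF _ refl, of "M \<union> A"] by auto
  then have "subalgebra M (composite R M A) R"
    by (intro subring_is_subalgebra subfieldE(1)) auto
  then show "Span M Us \<subseteq> composite R M A"
    using gens MA by (intro subalgebra_Span_incl[OF M]) auto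
qed

lemma (in field) composite_finite_dimension:
  assumes M: "subfield M R" and B: "subfield B R" "B \<subseteq> M" and A: "subfield A R"
    and fin: "finite_dimension B A"
  shows "finite_dimension M (composite R M A)" and "dim M (composite R M A) \<le> dim B A"
proof -
  obtain Us where Us: "set Us \<subseteq> carrier R" "length Us = dim B A" "Span B Us = A"
    using exists_base[OF B(1) finite_dimensionE[OF B(1) fin]] by (auto simp: over_def)
  have "composite R M A = Span M Us" using composite_eq_Span[OF M B A Us(1,3)] .
  then show "finite_dimension M (composite R M A)" and "dim M (composite R M A) \<le> dim B A"
    using Span_finite_dimension[OF M Us(1)] dim_Span_le_length[OF M Us(1)] Us(2)
    by (simp_all del: Span.simps)
qed

lemma (in field) subfield_vimage:
  assumes h: "h \<in> ring_hom R S" and S: "field S" and K: "subfield K S"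
  shows "subfield {x \<in> carrier R. h x \<in> K} R"
proof -
  interpret S: field S by fact
  interpret H: ring_hom_ring R S h using ring_hom_ringI2[OF ring_axioms S.ring_axioms h] .
  have "subring {x \<in> carrier R. h x \<in> K} R"
    by (rule subringI) (use subringE[OF subfieldE(1)[OF K]] in auto)
  then show ?thesis
  proof (rule subfieldI')
    fix x assume x: "x \<in> {x \<in> carrier R. h x \<in> K} - {\<zero>}"
    then have inv_x: "inv x \<in> carrier R" "inv x \<otimes> x = \<one>"
      using subfield_m_inv[OF carrier_is_subfield] by auto
    then have "h (inv x) \<otimes>\<^bsub>S\<^esub> h x = \<one>\<^bsub>S\<^esub>"
      using x by (simp flip: H.hom_mult)
    then have "h x \<noteq> \<zero>\<^bsub>S\<^esub>" and "inv\<^bsub>S\<^esub> (h x) = h (inv x)"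
      using x inv_x by (auto intro: S.inv_char simp: S.m_comm)
    then show "inv x \<in> {x \<in> carrier R. h x \<in> K}"
      using S.subfield_m_inv(1)[OF K, of "h x"] x inv_x by auto
  qed
qed

lemma (in field) finite_dimension_ring_hom_image:
  assumes h: "h \<in> ring_hom R S" and S: "field S" and K: "subfield K R"
    and fin: "finite_dimension K E"
  shows "ring.finite_dimension S (h ` K) (h ` E)" and "ring.dim S (h ` K) (h ` E) = dim K E"
proof -
  interpret S: field S by fact
  interpret H: ring_hom_ring R S h using ring_hom_ringI2[OF ring_axioms S.ring_axioms h] .
  have "E \<subseteq> carrier R"
    using subalgebra_in_carrier[OF finite_dimension_imp_subalgebra[OF K fin]] .
  then have "inj_on h E"
    using non_trivial_field_hom_is_inj[OF h field_axioms S] by (rule inj_on_subset[rotated])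
  then have "S.dimension (dim K E) (h ` K) (h ` E)"
    using H.inj_hom_dimension[OF K S.one_not_zero] finite_dimensionE[OF K fin]
    by (simp add: over_def)
  then show "S.finite_dimension (h ` K) (h ` E)" and "S.dim (h ` K) (h ` E) = dim K E"
    using S.finite_dimensionI S.dimI[OF H.img_is_subfield(2)[OF K S.one_not_zero]]
    by (auto simp: over_def)
qed

lemma (in domain) dim_pos:
  assumes K: "subfield K R" and fin: "finite_dimension K E" and one: "\<one> \<in> E"
  shows "0 < dim K E"
proof (rule ccontr)
  assume "\<not> 0 < dim K E"
  then have "dimension 0 K E"
    using finite_dimensionE[OF K fin] by (simp add: over_def)
  then have "E = {\<zero>}"
    using dimension_zero[OF K] by simp
  then show False
    using one by simp
qed

lemma power_tower_subfield: "power_tower R p W \<Longrightarrow> subfield (W n) R"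
  unfolding power_tower_def by blast

lemma power_tower_eq_generate_field:
  "power_tower R p W \<Longrightarrow> j \<le> i \<Longrightarrow> W j = generate_field R (W i \<union> pow_subfield R p j)"
  unfolding power_tower_def composite_def by blast

lemma (in field) power_tower_subset:
  assumes W: "power_tower R p W" and "j \<le> i"
  shows "W i \<subseteq> W j" and "pow_subfield R p j \<subseteq> W j"
proof -
  have "W i \<union> pow_subfield R p j \<subseteq> carrier R"
    using subfieldE(3)[OF power_tower_subfield[OF W]] unfolding pow_subfield_def by auto
  then show "W i \<subseteq> W j" and "pow_subfield R p j \<subseteq> W j"
    using generate_fieldE(2) power_tower_eq_generate_field[OF assms] by blast+
qed

lemma (in field) power_tower_zero:
  assumes W: "power_tower R p W"
  shows "W 0 = carrier R"
  using power_tower_subset(2)[OF W order_refl, of 0] subfieldE(3)[OF power_tower_subfield[OF W]]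
  unfolding pow_subfield_def by auto

lemma (in field) power_tower_frobenius_image_subset:
  fixes p :: nat
  assumes p: "prime p" and char: "[p] \<cdot> \<one> = \<zero>" and W: "power_tower R p W"
  shows "(\<lambda>x. x [^] p) ` W n \<subseteq> W (Suc n)"
proof -
  let ?V = "{x \<in> carrier R. x [^] p \<in> W (Suc n)}"
  note sub = power_tower_subfield[OF W]
  have "subfield ?V R"
    using subfield_vimage[OF frobenius_is_ring_hom[OF p char] field_axioms sub] .
  moreover have "W (Suc n) \<subseteq> ?V"
    using monoid.nat_pow_closed[OF ring.is_monoid[OF subring_is_ring[OF subfieldE(1)[OF sub]]]]
      subfieldE(3)[OF sub[of "Suc n"]] by (auto simp flip: nat_pow_consistent)
  moreover have "pow_subfield R p n \<subseteq> ?V"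
  proof -
    have "(\<lambda>x. x [^] p) ` pow_subfield R p n \<subseteq> W (Suc n)"
      using power_tower_subset(2)[OF W order_refl, of "Suc n"] by (simp flip: pow_subfield_Suc)
    then show ?thesis
      unfolding pow_subfield_def by auto
  qed
  ultimately have "generate_field R (W (Suc n) \<union> pow_subfield R p n) \<subseteq> ?V"
    by (intro generate_field_min_subfield1) auto
  then show ?thesis
    using power_tower_eq_generate_field[OF W, of n "Suc n"] by auto
qed

lemma (in field) power_tower_Suc_eq_composite:
  fixes p :: nat
  assumes p: "prime p" and char: "[p] \<cdot> \<one> = \<zero>" and W: "power_tower R p W"
  shows "W (Suc n) = composite R (W (Suc (Suc n))) ((\<lambda>x. x [^] p) ` W n)"
proof -
  let ?A = "(\<lambda>x. x [^] p) ` W n"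
  have A: "?A \<subseteq> W (Suc n)"
    using power_tower_frobenius_image_subset[OF p char W] .
  have carrier: "W (Suc (Suc n)) \<union> ?A \<subseteq> carrier R"
    using A subfieldE(3)[OF power_tower_subfield[OF W]] by blast
  have "pow_subfield R p (Suc n) \<subseteq> ?A"
    using power_tower_subset(2)[OF W order_refl, of n] by (auto simp: pow_subfield_Suc)
  then have "generate_field R (W (Suc (Suc n)) \<union> pow_subfield R p (Suc n))
      \<subseteq> composite R (W (Suc (Suc n))) ?A"
    unfolding composite_def using carrier by (intro mono_generate_field) auto
  then have "W (Suc n) \<subseteq> composite R (W (Suc (Suc n))) ?A"
    using power_tower_eq_generate_field[OF W, of "Suc n" "Suc (Suc n)"] by simp
  moreover have "composite R (W (Suc (Suc n))) ?A \<subseteq> W (Suc n)"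
    unfolding composite_def using carrier A power_tower_subset(1)[OF W, of "Suc n" "Suc (Suc n)"]
    by (intro generate_field_min_subfield1 power_tower_subfield[OF W]) auto
  ultimately show ?thesis by blast
qed

lemma (in field) power_tower_degree_Suc:
  fixes p :: nat
  assumes p: "prime p" and char: "[p] \<cdot> \<one> = \<zero>" and W: "power_tower R p W"
    and fin: "finite_dimension (W (Suc n)) (W n)"
  shows "finite_dimension (W (Suc (Suc n))) (W (Suc n))"
    and "dim (W (Suc (Suc n))) (W (Suc n)) \<le> dim (W (Suc n)) (W n)"
proof -
  let ?F = "\<lambda>x. x [^] p"
  have hom: "?F \<in> ring_hom R R" using frobenius_is_ring_hom[OF p char] .
  interpret F: ring_hom_ring R R ?F using ring_hom_ringI2[OF ring_axioms ring_axioms hom] .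
  note sub = power_tower_subfield[OF W]
  have fin_img: "finite_dimension (?F ` W (Suc n)) (?F ` W n)"
    and dim_img: "dim (?F ` W (Suc n)) (?F ` W n) = dim (W (Suc n)) (W n)"
    using finite_dimension_ring_hom_image[OF hom field_axioms sub fin] by auto
  note composite = composite_finite_dimension[OF sub F.img_is_subfield(2)[OF sub one_not_zero]
      power_tower_frobenius_image_subset[OF p char W] F.img_is_subfield(2)[OF sub one_not_zero]
      fin_img, folded power_tower_Suc_eq_composite[OF p char W]]
  show "finite_dimension (W (Suc (Suc n))) (W (Suc n))"
    using composite(1) .
  show "dim (W (Suc (Suc n))) (W (Suc n)) \<le> dim (W (Suc n)) (W n)"
    using composite(2) dim_img by simp
qed

lemma (in field) power_tower_degree_0:
  fixes p :: nat
  assumes p: "prime p" and char: "[p] \<cdot> \<one> = \<zero>"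
    and fin: "finite_dimension (pow_subfield R p 1) (carrier R)" and W: "power_tower R p W"
  shows "finite_dimension (W 1) (W 0)"
proof -
  let ?F = "\<lambda>x. x [^] p"
  have "pow_subfield R p 1 = ?F ` carrier R"
    unfolding pow_subfield_def by simp
  then have "subfield (pow_subfield R p 1) R"
    using ring_hom_ring.img_is_subfield(2)[OF ring_hom_ringI2[OF ring_axioms ring_axioms
        frobenius_is_ring_hom[OF p char]] carrier_is_subfield one_not_zero] by simp
  moreover have "composite R (W 1) (carrier R) = W 0"
    using power_tower_eq_generate_field[OF W, of 0 1] power_tower_zero[OF W]
    unfolding composite_def pow_subfield_def by simp
  ultimately show ?thesis
    using composite_finite_dimension(1)[OF power_tower_subfield[OF W] _
        power_tower_subset(2)[OF W order_refl] carrier_is_subfield fin] by simp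
qed

theorem mainTheorem2:
  fixes R :: "('a, 'b) ring_scheme" and p :: nat and W :: "nat \<Rightarrow> 'a set"
  assumes "field R"
    and "prime p"
    and "add_pow R p \<one>\<^bsub>R\<^esub> = \<zero>\<^bsub>R\<^esub>"
    and "ring.finite_dimension R (pow_subfield R p 1) (carrier R)"
    and "power_tower R p W"
  shows "(\<forall>n. ring.finite_dimension R (W (Suc n)) (W n))
       \<and> (\<forall>n. ring.dim R (W (Suc (Suc n))) (W (Suc n)) \<le> ring.dim R (W (Suc n)) (W n))
       \<and> (\<forall>n. 1 \<le> ring.dim R (W (Suc n)) (W n))"
proof -
  interpret field R by fact
  have fin: "finite_dimension (W (Suc n)) (W n)" for n
  proof (induction n)
    case 0
    then show ?case using power_tower_degree_0[OF assms(2-5)] by simp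
  next
    case (Suc n)
    then show ?case using power_tower_degree_Suc(1)[OF assms(2,3,5)] by blast
  qed
  moreover have "1 \<le> dim (W (Suc n)) (W n)" for n
    using dim_pos[OF power_tower_subfield[OF assms(5)] fin]
      subringE(3)[OF subfieldE(1)[OF power_tower_subfield[OF assms(5)]]] by (simp add: Suc_le_eq)
  ultimately show ?thesis
    using power_tower_degree_Suc(2)[OF assms(2,3,5)] by blast
qed

end
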